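(* Let $\ell\geq k$ be positive integers, $b\in[\ell-k+1]$, $\mu\in\mathcal{P}^\ell$, and put $b'=\ell-k-b+2$. Consider the conditions, for a partition $\nu\in\mathcal{P}^\ell$ and an integer $c\in[\ell-k+1]$: (i) $\nu(c)=c+k-1$ and $\nu(c+k-1)=c$; (ii) if $1\leq i<c$ then $\nu(\nu(i))>i$; (iii) if $c+k-1<i\leq\ell$ then $\nu(\nu(i))<i$. Then: (a) $\mu$ satisfies (i), (ii), (iii) for $c=b$ if and only if $\tau_\ell(\mu)$ satisfies (i), (ii), (iii) for $c=b'$. (b) Suppose $\mu$ satisfies (i) for $c=b$, and define $\tilde\lambda,\tilde\lambda'\in\mathcal{P}_{\rm sq}^k$ by $\tilde\lambda(i)=\mu(b+i-1)-b+1$ and $\tilde\lambda'(i)=\tau_\ell(\mu)(b'+i-1)-b'+1$ for $1\leq i\leq k$. Then $\tau_k(\tilde\lambda)=\tilde\lambda'$.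
   Context: For a positive integer $n$, $[n]=\{1,\dots,n\}$. A partition with $n$ parts is a sequence $(\lambda_1,\dots,\lambda_n)$ of positive integers with $\lambda_1\geq\dots\geq\lambda_n>0$. $\mathcal{P}^{n,k}$ is the set of partitions with exactly $n$ parts and $\lambda_1\leq k$, regarded as weakly decreasing functions $[n]\to[k]$, $\lambda(i)=\lambda_i$; $\mathcal{P}^k=\mathcal{P}^{k,k}$. The map $\tau_k:\mathcal{P}^{n,k}\to\mathcal{P}^{n,k}$ is $\tau_k(\lambda_1,\dots,\lambda_n)=(k+1-\lambda_n,\dots,k+1-\lambda_1)$. $\mathcal{P}_{\rm sq}^k=\{\lambda\in\mathcal{P}^k:\lambda_1=k,\ \lambda_k=1\}$. *)

theory Defs
  imports Main
begin

text \<open>Partitions with exactly n parts and largest part at most k, as weakly decreasing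
functions [n] -> [k]; extended by 0 outside [n] so that equality of partitions is
plain function equality.\<close>
definition Part :: "nat \<Rightarrow> nat \<Rightarrow> (nat \<Rightarrow> nat) set" where
  "Part n k = {lam. (\<forall>i\<in>{1..n}. lam i \<in> {1..k})
                  \<and> (\<forall>i j. 1 \<le> i \<longrightarrow> i \<le> j \<longrightarrow> j \<le> n \<longrightarrow> lam j \<le> lam i)
                  \<and> (\<forall>i. i \<notin> {1..n} \<longrightarrow> lam i = 0)}"

definition tau :: "nat \<Rightarrow> nat \<Rightarrow> (nat \<Rightarrow> nat) \<Rightarrow> (nat \<Rightarrow> nat)" where
  "tau n k lam = (\<lambda>i. if i \<in> {1..n} then k + 1 - lam (n + 1 - i) else 0)"

definition Psq :: "nat \<Rightarrow> (nat \<Rightarrow> nat) set" where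
  "Psq k = {lam \<in> Part k k. lam 1 = k \<and> lam k = 1}"

definition cond_i :: "nat \<Rightarrow> (nat \<Rightarrow> nat) \<Rightarrow> nat \<Rightarrow> bool" where
  "cond_i k nu c \<longleftrightarrow> nu c = c + k - 1 \<and> nu (c + k - 1) = c"

definition cond_all :: "nat \<Rightarrow> nat \<Rightarrow> (nat \<Rightarrow> nat) \<Rightarrow> nat \<Rightarrow> bool" where
  "cond_all l k nu c \<longleftrightarrow> cond_i k nu c
     \<and> (\<forall>i. 1 \<le> i \<and> i < c \<longrightarrow> nu (nu i) > i)
     \<and> (\<forall>i. c + k - 1 < i \<and> i \<le> l \<longrightarrow> nu (nu i) < i)"

end

theory Submission
  imports Defs
begin

text \<open>Conjugating by the order reversal i \<mapsto> l+1-i turns tau_l(\<mu>) into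
i \<mapsto> l+1-\<mu>(l+1-i), so tau_l(\<mu>) composed with itself is \<mu>\<circ>\<mu> read backwards:
the inequalities (ii) below b for \<mu> become the inequalities (iii) above b'+k-1 for
tau_l(\<mu>) and vice versa, while (i) is mapped to itself. Since tau_l is an involution,
one direction suffices. Condition (i) and monotonicity force \<mu> to map the interval
[b, b+k-1] into itself, so the restriction of \<mu> to it is a square partition, and
reading that restriction through the same reversal gives its image under tau_k.\<close>

lemma Part_range: "mu \<in> Part n k \<Longrightarrow> 1 \<le> i \<Longrightarrow> i \<le> n \<Longrightarrow> 1 \<le> mu i \<and> mu i \<le> k"
  unfolding Part_def by auto

lemma Part_antimono: "mu \<in> Part n k \<Longrightarrow> 1 \<le> i \<Longrightarrow> i \<le> j \<Longrightarrow> j \<le> n \<Longrightarrow> mu j \<le> mu i"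
  unfolding Part_def by auto

lemma Part_outside: "mu \<in> Part n k \<Longrightarrow> i \<notin> {1..n} \<Longrightarrow> mu i = 0"
  unfolding Part_def by auto

lemma tau_apply: "1 \<le> i \<Longrightarrow> i \<le> n \<Longrightarrow> tau n k mu i = k + 1 - mu (n + 1 - i)"
  by (simp add: tau_def)

lemma tau_outside: "i \<notin> {1..n} \<Longrightarrow> tau n k mu i = 0"
  unfolding tau_def by (simp only: if_False)

lemma tau_in_Part:
  assumes "mu \<in> Part n k"
  shows "tau n k mu \<in> Part n k"
proof -
  have "tau n k mu i \<in> {1..k}" if "i \<in> {1..n}" for i
  proof -
    have "1 \<le> mu (n + 1 - i) \<and> mu (n + 1 - i) \<le> k"
      using that Part_range[OF assms, of "n + 1 - i"] by auto
    then show ?thesis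
      using that by (auto simp: tau_def)
  qed
  moreover have "tau n k mu j \<le> tau n k mu i" if "1 \<le> i" "i \<le> j" "j \<le> n" for i j
  proof -
    have "mu (n + 1 - i) \<le> mu (n + 1 - j)"
      using that Part_antimono[OF assms, of "n + 1 - j" "n + 1 - i"] by auto
    then show ?thesis
      using that by (simp add: tau_def)
  qed
  ultimately show ?thesis
    unfolding Part_def by (auto simp: tau_def)
qed

lemma tau_tau:
  assumes "mu \<in> Part n k"
  shows "tau n k (tau n k mu) = mu"
proof
  fix i
  show "tau n k (tau n k mu) i = mu i"
  proof (cases "i \<in> {1..n}")
    case True
    then have "tau n k mu (n + 1 - i) = k + 1 - mu i"
      using tau_apply[of "n + 1 - i" n k mu] by auto
    then show ?thesis
      using True Part_range[OF assms, of i] tau_apply[of i n k "tau n k mu"] by auto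
  next
    case False
    then show ?thesis
      using Part_outside[OF assms] tau_outside by metis
  qed
qed

lemma tau_in_Psq:
  assumes "lam \<in> Psq k" and "1 \<le> k"
  shows "tau k k lam \<in> Psq k"
  using assms tau_in_Part[of lam k k] unfolding Psq_def by (auto simp: tau_def)

lemma tau_square_apply:
  assumes "mu \<in> Part l l" and "1 \<le> i" and "i \<le> l"
  shows "tau l l mu (tau l l mu i) = l + 1 - mu (mu (l + 1 - i))"
proof -
  have range: "1 \<le> mu (l + 1 - i)" "mu (l + 1 - i) \<le> l"
    using Part_range[OF assms(1), of "l + 1 - i"] assms(2,3) by auto
  have "tau l l mu i = l + 1 - mu (l + 1 - i)"
    using assms(2,3) by (rule tau_apply)
  moreover have "l + 1 - (l + 1 - mu (l + 1 - i)) = mu (l + 1 - i)"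
    using range by simp
  ultimately show ?thesis
    using range tau_apply[of "tau l l mu i" l l mu] by simp
qed

lemma cond_all_tau:
  assumes "1 \<le> k" and "1 \<le> b" and "1 \<le> b'" and "b + b' + k = l + 2"
    and "mu \<in> Part l l" and "cond_all l k mu b"
  shows "cond_all l k (tau l l mu) b'"
proof -
  define nu where "nu = tau l l mu"
  have fixed: "mu b = b + k - 1" "mu (b + k - 1) = b"
    and below: "\<And>i. 1 \<le> i \<and> i < b \<Longrightarrow> i < mu (mu i)"
    and above: "\<And>i. b + k - 1 < i \<and> i \<le> l \<Longrightarrow> mu (mu i) < i"
    using assms(6) by (auto simp: cond_all_def cond_i_def)
  have "l + 1 - b' = b + k - 1" "l + 1 - (b' + k - 1) = b"
    using assms(1-4) by auto
  then have "nu b' = l + 1 - mu (b + k - 1)" "nu (b' + k - 1) = l + 1 - mu b"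
    using assms(1-4) tau_apply[of b' l l mu] tau_apply[of "b' + k - 1" l l mu]
    by (simp_all add: nu_def)
  then have "cond_i k nu b'"
    using fixed assms(1-4) unfolding cond_i_def by auto
  moreover have "i < nu (nu i)" if "1 \<le> i \<and> i < b'" for i
  proof -
    have "mu (mu (l + 1 - i)) < l + 1 - i"
      using that assms(1-4) by (intro above) auto
    then show ?thesis
      using that assms(1-4) tau_square_apply[OF assms(5), of i] by (simp add: nu_def)
  qed
  moreover have "nu (nu i) < i" if "b' + k - 1 < i \<and> i \<le> l" for i
  proof -
    have "l + 1 - i < mu (mu (l + 1 - i))"
      using that assms(1-4) by (intro below) auto
    moreover have "nu (nu i) = l + 1 - mu (mu (l + 1 - i))"
      using that tau_square_apply[OF assms(5), of i] by (simp add: nu_def)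
    ultimately show ?thesis
      using that by linarith
  qed
  ultimately show ?thesis
    unfolding cond_all_def nu_def by blast
qed

lemma cond_all_tau_iff:
  assumes "1 \<le> k" and "1 \<le> b" and "1 \<le> b'" and "b + b' + k = l + 2"
    and "mu \<in> Part l l"
  shows "cond_all l k mu b \<longleftrightarrow> cond_all l k (tau l l mu) b'"
proof
  show "cond_all l k mu b \<Longrightarrow> cond_all l k (tau l l mu) b'"
    using assms by (rule cond_all_tau)
next
  assume "cond_all l k (tau l l mu) b'"
  then have "cond_all l k (tau l l (tau l l mu)) b"
    using assms(1-4) tau_in_Part[OF assms(5)] cond_all_tau[of k b' b l "tau l l mu"] by auto
  then show "cond_all l k mu b"
    unfolding tau_tau[OF assms(5)] .
qed

definition block :: "nat \<Rightarrow> nat \<Rightarrow> (nat \<Rightarrow> nat) \<Rightarrow> nat \<Rightarrow> nat" where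
  "block k b mu = (\<lambda>i. if i \<in> {1..k} then mu (b + i - 1) + 1 - b else 0)"

lemma cond_i_maps_block:
  assumes "mu \<in> Part n m" and "cond_i k mu b" and "1 \<le> b" and "b + k - 1 \<le> n"
    and "b \<le> j" and "j \<le> b + k - 1"
  shows "b \<le> mu j \<and> mu j \<le> b + k - 1"
  using assms Part_antimono[OF assms(1), of b j] Part_antimono[OF assms(1), of j "b + k - 1"]
  by (auto simp: cond_i_def)

lemma block_in_Psq:
  assumes "mu \<in> Part n m" and "cond_i k mu b" and "1 \<le> b" and "b + k - 1 \<le> n" and "1 \<le> k"
  shows "block k b mu \<in> Psq k"
proof -
  have "block k b mu i \<in> {1..k}" if "i \<in> {1..k}" for i
  proof -
    have "b \<le> mu (b + i - 1) \<and> mu (b + i - 1) \<le> b + k - 1"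
      using that cond_i_maps_block[OF assms(1-4), of "b + i - 1"] by auto
    then show ?thesis
      using that by (auto simp: block_def)
  qed
  moreover have "block k b mu j \<le> block k b mu i" if "1 \<le> i" "i \<le> j" "j \<le> k" for i j
  proof -
    have "mu (b + j - 1) \<le> mu (b + i - 1)"
      using that assms Part_antimono[OF assms(1), of "b + i - 1" "b + j - 1"] by auto
    then show ?thesis
      using that by (simp add: block_def)
  qed
  ultimately show ?thesis
    using assms(2,5) unfolding Psq_def Part_def by (auto simp: block_def cond_i_def)
qed

lemma tau_block:
  assumes "1 \<le> k" and "1 \<le> b" and "1 \<le> b'" and "b + b' + k = l + 2"
    and "mu \<in> Part l l" and "cond_i k mu b"
  shows "tau k k (block k b mu) = block k b' (tau l l mu)"
proof
  fix i
  show "tau k k (block k b mu) i = block k b' (tau l l mu) i"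
  proof (cases "i \<in> {1..k}")
    case True
    define m where "m = mu (b + k - i)"
    have "b \<le> m \<and> m \<le> b + k - 1"
      using True assms unfolding m_def by (intro cond_i_maps_block[OF assms(5,6)]) auto
    then have m_range: "b \<le> m" "m \<le> b + k - 1"
      by auto
    have "block k b mu (k + 1 - i) = m + 1 - b"
      using True by (auto simp: block_def m_def)
    then have "tau k k (block k b mu) i = k + 1 - (m + 1 - b)"
      using True by (simp add: tau_apply)
    also have "\<dots> = l + 1 - m + 1 - b'"
      using m_range assms(4) by linarith
    also have "l + 1 - m = tau l l mu (b' + i - 1)"
    proof -
      have "l + 1 - (b' + i - 1) = b + k - i"
        using True assms(1-4) by auto
      then show ?thesis
        using True assms(1-4) tau_apply[of "b' + i - 1" l l mu] by (auto simp: m_def)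
    qed
    finally show ?thesis
      using True by (simp add: block_def)
  next
    case False
    then show ?thesis
      using tau_outside[OF False] unfolding block_def by (simp only: if_False)
  qed
qed

theorem lemma3p3:
  fixes l k b :: nat and mu :: "nat \<Rightarrow> nat"
  assumes "1 \<le> k" and "k \<le> l" and "b \<in> {1..l - k + 1}" and "mu \<in> Part l l"
  shows "(cond_all l k mu b \<longleftrightarrow> cond_all l k (tau l l mu) (l + 2 - (k + b)))
    \<and> (cond_i k mu b \<longrightarrow>
        (let lt = (\<lambda>i. if i \<in> {1..k} then mu (b + i - 1) + 1 - b else 0);
             lt' = (\<lambda>i. if i \<in> {1..k}
                        then tau l l mu ((l + 2 - (k + b)) + i - 1) + 1 - (l + 2 - (k + b))
                        else 0)
         in lt \<in> Psq k \<and> lt' \<in> Psq k \<and> tau k k lt = lt'))"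
proof -
  define b' where "b' = l + 2 - (k + b)"
  have pos: "1 \<le> b" "1 \<le> b'" "b + b' + k = l + 2"
    using assms(1-3) by (auto simp: b'_def)
  have "b + k - 1 \<le> l"
    using pos by simp
  have "block k b mu \<in> Psq k \<and> block k b' (tau l l mu) \<in> Psq k
      \<and> tau k k (block k b mu) = block k b' (tau l l mu)"
    if "cond_i k mu b"
    using block_in_Psq[OF assms(4) that pos(1) \<open>b + k - 1 \<le> l\<close> assms(1)]
      tau_block[OF assms(1) pos assms(4) that] tau_in_Psq[OF _ assms(1)] by metis
  then show ?thesis
    using cond_all_tau_iff[OF assms(1) pos assms(4)] unfolding block_def Let_def b'_def by blast
qed

end
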